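(* Let $G=(V,E)$ be a connected undirected policy graph with $V=\mathcal{T}=\{v_1,\dots,v_k\}$ (no vertex $\bot$), and let $\mathbf{W}$ be a workload with $k$ columns. Fix a value $v=v_i\in V$. Let $G'=(V',E')$ with $V'=V\setminus\{v\}\cup\{\bot\}$ and $E'=E\setminus\{(v,u):u\in V\}\cup\{(\bot,u):(v,u)\in E\}$. For a database $\mathbf{x}\in\mathbb{R}^k$ let $\mathbf{x}_{-v}\in\mathbb{R}^{k-1}$ be $\mathbf{x}$ with the entry $\mathbf{x}[v]$ removed, and let $\mathbf{W}'=\mathbf{W}\mathbf{D}$ where $\mathbf{D}$ is the $k\times(k-1)$ matrix $$\mathbf{D}=\begin{pmatrix}\mathbf{I}_{i-1} & \mathbf{0}\\ -\mathbf{1}_{i-1}^\top & -\mathbf{1}_{k-i}^\top\\ \mathbf{0} & \mathbf{I}_{k-i}\end{pmatrix}$$ ($\mathbf{I}_j$ the $j\times j$ identity, $\mathbf{1}_j$ the all-ones vector of length $j$). Then: (i) $\mathbf{W}\mathbf{x}=\mathbf{W}'\mathbf{x}_{-v}+\mathbf{c}(\mathbf{W},n)$, where $n=\sum_{j}\mathbf{x}[j]$ is the database size and $\mathbf{c}(\mathbf{W},n)$ is a vector depending only on $\mathbf{W}$ and $n$; and (ii) any two databases $\mathbf{y},\mathbf{z}$ are neighbors under $G$ if and only if $\mathbf{y}_{-v}$ and $\mathbf{z}_{-v}$ are neighbors under $G'$.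
   Context: Databases are histogram vectors indexed by $\mathcal{T}$. Blowfish neighbors under a policy graph $H=(V_H,E_H)$, $V_H\subseteq\mathcal{T}\cup\{\bot\}$: two databases are neighbors iff they differ in the value of exactly one record, $u$ in one and $w$ in the other, with $(u,w)\in E_H$ (vector difference $\pm(\mathbf{e}_u-\mathbf{e}_w)$), or one is obtained from the other by adding a single record of value $u$ with $(u,\bot)\in E_H$ (vector difference $\pm\mathbf{e}_u$). Since $G$ has no $\bot$, neighbors under $G$ have the same size $n$. *)

theory Defs
  imports Complex_Main
begin

text \<open>The value domain is T = {0..<k} (0-based: v_j of the paper is j-1).
 A vector in R^d is a function nat => real of which only the entries p < d matter.
 A policy graph is a set of (ordered) edges between vertices of type nat option,
 where None plays the role of the special vertex bot and Some a the value a.\<close>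

definition unitv :: "nat \<Rightarrow> nat \<Rightarrow> real" where
  "unitv u p = (if p = u then 1 else 0)"

text \<open>Blowfish neighbours of two vectors y, z of length d whose coordinate p
 holds the count of the value lab p, under the policy graph with edge set H.\<close>
definition blowfish_nbr ::
  "(nat option \<times> nat option) set \<Rightarrow> nat \<Rightarrow> (nat \<Rightarrow> nat) \<Rightarrow> (nat \<Rightarrow> real) \<Rightarrow> (nat \<Rightarrow> real) \<Rightarrow> bool" where
  "blowfish_nbr H d lab y z \<longleftrightarrow>
     (\<exists>u w. u < d \<and> w < d \<and> u \<noteq> w \<and> (Some (lab u), Some (lab w)) \<in> H \<and>
        ((\<forall>p<d. y p - z p = unitv u p - unitv w p) \<or> (\<forall>p<d. z p - y p = unitv u p - unitv w p)))
   \<or> (\<exists>u. u < d \<and> (Some (lab u), None) \<in> H \<and>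
        ((\<forall>p<d. y p - z p = unitv u p) \<or> (\<forall>p<d. z p - y p = unitv u p)))"

definition graph_edges :: "(nat \<times> nat) set \<Rightarrow> (nat option \<times> nat option) set" where
  "graph_edges E = {(Some a, Some b) | a b. (a, b) \<in> E}"

definition collapse_edges :: "(nat \<times> nat) set \<Rightarrow> nat \<Rightarrow> (nat option \<times> nat option) set" where
  "collapse_edges E v =
     {(Some a, Some b) | a b. (a, b) \<in> E \<and> a \<noteq> v \<and> b \<noteq> v}
   \<union> {(None, Some u) | u. (v, u) \<in> E}
   \<union> {(Some u, None) | u. (v, u) \<in> E}"

text \<open>Position p of x_{-v} holds the count of value ins_idx v p.\<close>
definition ins_idx :: "nat \<Rightarrow> nat \<Rightarrow> nat" where
  "ins_idx v p = (if p < v then p else Suc p)"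

definition del_entry :: "nat \<Rightarrow> (nat \<Rightarrow> real) \<Rightarrow> nat \<Rightarrow> real" where
  "del_entry v x = (\<lambda>p. x (ins_idx v p))"

text \<open>The k x (k-1) matrix D (0-based row a, column b; v = i-1).\<close>
definition Dmat :: "nat \<Rightarrow> nat \<Rightarrow> nat \<Rightarrow> real" where
  "Dmat v a b = (if a < v then (if a = b then 1 else 0)
                 else if a = v then -1
                 else (if a = Suc b then 1 else 0))"

definition matmul :: "nat \<Rightarrow> (nat \<Rightarrow> nat \<Rightarrow> real) \<Rightarrow> (nat \<Rightarrow> nat \<Rightarrow> real) \<Rightarrow> nat \<Rightarrow> nat \<Rightarrow> real" where
  "matmul n A B = (\<lambda>r c. \<Sum>a<n. A r a * B a c)"

definition mulvec :: "nat \<Rightarrow> (nat \<Rightarrow> nat \<Rightarrow> real) \<Rightarrow> (nat \<Rightarrow> real) \<Rightarrow> nat \<Rightarrow> real" where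
  "mulvec n A x = (\<lambda>r. \<Sum>c<n. A r c * x c)"

end

theory Submission
  imports Defs
begin

text \<open>
  For (i), the matrix D rewrites x as x_{-v} with the entry x[v] replaced by x[v] - n, so
  W D x_{-v} = W x - n W e_v.  For (ii), every neighbouring pair under G or under G'
  differs by e_u - e_w for an edge (u,w) of G: an edge (bot,u) of G' arises from the edge
  (v,u) of G, whose e_v-component disappears in x_{-v}.  For databases of equal size both
  sides of such an identity sum to zero, and a vector is determined by its sum together
  with its entries off v, so nothing is lost by deleting the v-th entry.
\<close>

lemma ins_idx_neq: "ins_idx v p \<noteq> v"
  by (simp add: ins_idx_def)

lemma ins_idx_less: "v < k \<Longrightarrow> p < k - 1 \<Longrightarrow> ins_idx v p < k"
  by (auto simp: ins_idx_def)

lemma inj_ins_idx: "inj (ins_idx v)"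
  by (rule injI) (auto simp: ins_idx_def split: if_splits)

lemma ins_idx_image:
  assumes "v < k"
  shows "ins_idx v ` {..<k-1} = {..<k} - {v}"
proof
  show "ins_idx v ` {..<k-1} \<subseteq> {..<k} - {v}"
    using ins_idx_less[OF assms] ins_idx_neq by auto
  show "{..<k} - {v} \<subseteq> ins_idx v ` {..<k-1}"
  proof
    fix u assume "u \<in> {..<k} - {v}"
    then have "u = ins_idx v (if u < v then u else u - 1)" "(if u < v then u else u - 1) < k - 1"
      using assms by (auto simp: ins_idx_def)
    then show "u \<in> ins_idx v ` {..<k-1}" by blast
  qed
qed

lemma ins_idx_surj:
  assumes "v < k" "u < k" "u \<noteq> v"
  obtains p where "p < k - 1" "u = ins_idx v p"
  using assms ins_idx_image[of v k] by (metis Diff_iff imageE lessThan_iff singletonD)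

lemma sum_lessThan_split_ins_idx:
  assumes "v < k"
  shows "(\<Sum>j<k. f j) = f v + (\<Sum>p<k-1. f (ins_idx v p))"
proof -
  have "(\<Sum>j<k. f j) = f v + sum f ({..<k} - {v})"
    using assms by (simp add: sum.remove)
  also have "sum f ({..<k} - {v}) = (\<Sum>p<k-1. f (ins_idx v p))"
    unfolding ins_idx_image[OF assms, symmetric]
    by (simp add: sum.reindex inj_on_subset[OF inj_ins_idx])
  finally show ?thesis .
qed

lemma sum_Dmat_ins_idx:
  assumes "v < k" "a < k"
  shows "(\<Sum>p<k-1. Dmat v a p * x (ins_idx v p)) = x a - (if a = v then (\<Sum>j<k. x j) else 0)"
proof (cases "a = v")
  case True
  then show ?thesis
    using sum_lessThan_split_ins_idx[OF assms(1), of x] by (simp add: Dmat_def sum_negf)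
next
  case False
  have "(\<Sum>p<k-1. Dmat v a p * x (ins_idx v p))
      = (\<Sum>p<k-1. (\<lambda>j. if j = a then x j else 0) (ins_idx v p))"
    using False by (intro sum.cong) (auto simp: Dmat_def ins_idx_def)
  also have "\<dots> = x a"
    using sum_lessThan_split_ins_idx[OF assms(1), of "\<lambda>j. if j = a then x j else 0"] False assms(2)
    by simp
  finally show ?thesis using False by simp
qed

lemma mulvec_eq_mulvec_Dmat:
  assumes "v < k"
  shows "mulvec k W x r
     = mulvec (k - 1) (matmul k W (Dmat v)) (del_entry v x) r + (\<Sum>j<k. x j) * W r v"
proof -
  have "mulvec (k - 1) (matmul k W (Dmat v)) (del_entry v x) r
      = (\<Sum>p<k-1. \<Sum>a<k. W r a * (Dmat v a p * x (ins_idx v p)))"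
    by (simp add: mulvec_def matmul_def del_entry_def sum_distrib_right mult.assoc)
  also have "\<dots> = (\<Sum>a<k. W r a * (\<Sum>p<k-1. Dmat v a p * x (ins_idx v p)))"
    by (subst sum.swap) (simp add: sum_distrib_left)
  also have "\<dots> = (\<Sum>a<k. W r a * x a - (if a = v then W r a * (\<Sum>j<k. x j) else 0))"
  proof (intro sum.cong refl)
    fix a assume "a \<in> {..<k}"
    then show "W r a * (\<Sum>p<k-1. Dmat v a p * x (ins_idx v p))
        = W r a * x a - (if a = v then W r a * (\<Sum>j<k. x j) else 0)"
      using sum_Dmat_ins_idx[OF assms, of a x] by (simp add: right_diff_distrib)
  qed
  also have "\<dots> = mulvec k W x r - (\<Sum>j<k. x j) * W r v"
    using assms by (simp add: sum_subtractf mulvec_def)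
  finally show ?thesis by simp
qed

lemma eq_on_lessThan_iff_ins_idx:
  fixes f g :: "nat \<Rightarrow> 'a::cancel_comm_monoid_add"
  assumes "v < k" and "(\<Sum>j<k. f j) = (\<Sum>j<k. g j)"
  shows "(\<forall>j<k. f j = g j) \<longleftrightarrow> (\<forall>p<k-1. f (ins_idx v p) = g (ins_idx v p))"
proof
  assume "\<forall>j<k. f j = g j"
  then show "\<forall>p<k-1. f (ins_idx v p) = g (ins_idx v p)"
    using ins_idx_less[OF assms(1)] by simp
next
  assume off_v: "\<forall>p<k-1. f (ins_idx v p) = g (ins_idx v p)"
  then have "(\<Sum>p<k-1. f (ins_idx v p)) = (\<Sum>p<k-1. g (ins_idx v p))"
    by simp
  then have "f v = g v"
    using assms(2) sum_lessThan_split_ins_idx[OF assms(1), of f] sum_lessThan_split_ins_idx[OF assms(1), of g]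
    by (metis add_right_cancel)
  moreover have "f u = g u" if "u < k" "u \<noteq> v" for u
    using ins_idx_surj[OF assms(1) that] off_v by metis
  ultimately show "\<forall>j<k. f j = g j" by blast
qed

lemma sum_unitv: "u < k \<Longrightarrow> (\<Sum>j<k. unitv u j) = 1"
  by (simp add: unitv_def)

lemma unitv_ins_idx: "unitv (ins_idx v q) (ins_idx v p) = unitv q p"
  using inj_ins_idx by (simp add: unitv_def inj_eq)

lemma unitv_ins_idx_self: "unitv v (ins_idx v p) = 0"
  using ins_idx_neq by (simp add: unitv_def)

lemma diff_eq_iff_swap:
  fixes y z a :: "'a::ab_group_add"
  shows "z - y = a \<longleftrightarrow> y - z = - a"
  by (metis minus_diff_eq minus_minus)

lemma blowfish_nbr_graph_edges_iff:
  assumes "sym E"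
  shows "blowfish_nbr (graph_edges E) k id y z \<longleftrightarrow>
    (\<exists>u w. (u < k \<and> w < k \<and> u \<noteq> w \<and> (u, w) \<in> E) \<and> (\<forall>j<k. y j - z j = unitv u j - unitv w j))"
  unfolding blowfish_nbr_def graph_edges_def diff_eq_iff_swap[of "z _" "y _"] minus_diff_eq
  using assms by (auto simp: sym_def)

lemma collapse_edges_Some_Some:
  "(Some a, Some b) \<in> collapse_edges E v \<longleftrightarrow> (a, b) \<in> E \<and> a \<noteq> v \<and> b \<noteq> v"
  by (auto simp: collapse_edges_def)

lemma collapse_edges_Some_None: "(Some a, None) \<in> collapse_edges E v \<longleftrightarrow> (v, a) \<in> E"
  by (auto simp: collapse_edges_def)

lemma blowfish_nbr_collapse_edges_iff:
  assumes vk: "v < k" and Esym: "sym E"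
  shows "blowfish_nbr (collapse_edges E v) (k - 1) (ins_idx v) y z \<longleftrightarrow>
    (\<exists>u w. (u < k \<and> w < k \<and> u \<noteq> w \<and> (u, w) \<in> E) \<and>
      (\<forall>p<k-1. y p - z p = unitv u (ins_idx v p) - unitv w (ins_idx v p)))"
    (is "_ \<longleftrightarrow> (\<exists>u w. ?edge u w \<and> ?diff u w)")
proof
  note ins_lt = ins_idx_less[OF vk]
  assume "blowfish_nbr (collapse_edges E v) (k - 1) (ins_idx v) y z"
  then consider
      (edge) p q where "p < k - 1" "q < k - 1" "p \<noteq> q" "(ins_idx v p, ins_idx v q) \<in> E"
        "(\<forall>r<k-1. y r - z r = unitv p r - unitv q r) \<or> (\<forall>r<k-1. y r - z r = unitv q r - unitv p r)"
    | (bot) p where "p < k - 1" "(v, ins_idx v p) \<in> E"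
        "(\<forall>r<k-1. y r - z r = unitv p r) \<or> (\<forall>r<k-1. z r - y r = unitv p r)"
    unfolding blowfish_nbr_def diff_eq_iff_swap[of "z _" "y _"] minus_diff_eq
    by (auto simp: collapse_edges_Some_Some collapse_edges_Some_None)
  then show "\<exists>u w. ?edge u w \<and> ?diff u w"
  proof cases
    case edge
    then have "?edge (ins_idx v p) (ins_idx v q)" "?edge (ins_idx v q) (ins_idx v p)"
      using ins_lt inj_ins_idx Esym by (auto simp: inj_eq sym_def)
    moreover have "?diff (ins_idx v p) (ins_idx v q) \<or> ?diff (ins_idx v q) (ins_idx v p)"
      using edge(5) by (simp add: unitv_ins_idx)
    ultimately show ?thesis by blast
  next
    case bot
    then have "?edge (ins_idx v p) v" "?edge v (ins_idx v p)"
      using ins_lt vk Esym ins_idx_neq[of v p] by (auto simp: sym_def)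
    moreover have "?diff (ins_idx v p) v \<or> ?diff v (ins_idx v p)"
      using bot(3) by (simp add: unitv_ins_idx unitv_ins_idx_self diff_eq_iff_swap[of "z _" "y _"])
    ultimately show ?thesis by blast
  qed
next
  assume "\<exists>u w. ?edge u w \<and> ?diff u w"
  then obtain u w where uw: "u < k" "w < k" "u \<noteq> w" "(u, w) \<in> E" and diff: "?diff u w"
    by blast
  consider (from_v) "u = v" | (to_v) "w = v" | (off_v) "u \<noteq> v" "w \<noteq> v" by blast
  then show "blowfish_nbr (collapse_edges E v) (k - 1) (ins_idx v) y z"
  proof cases
    case from_v
    obtain q where q: "q < k - 1" "w = ins_idx v q" using ins_idx_surj[OF vk uw(2)] uw(3) from_v by metis
    then have "\<forall>r<k-1. z r - y r = unitv q r"
      using diff from_v by (simp add: unitv_ins_idx unitv_ins_idx_self diff_eq_iff_swap[of "z _" "y _"])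
    moreover have "(Some (ins_idx v q), None) \<in> collapse_edges E v"
      using q uw(4) from_v by (simp add: collapse_edges_Some_None)
    ultimately show ?thesis
      unfolding blowfish_nbr_def using q(1) by blast
  next
    case to_v
    obtain p where p: "p < k - 1" "u = ins_idx v p" using ins_idx_surj[OF vk uw(1)] uw(3) to_v by metis
    then have "\<forall>r<k-1. y r - z r = unitv p r"
      using diff to_v by (simp add: unitv_ins_idx unitv_ins_idx_self)
    moreover have "(Some (ins_idx v p), None) \<in> collapse_edges E v"
      using p uw(4) to_v Esym by (simp add: collapse_edges_Some_None sym_def)
    ultimately show ?thesis
      unfolding blowfish_nbr_def using p(1) by blast
  next
    case off_v
    obtain p q where pq: "p < k - 1" "u = ins_idx v p" "q < k - 1" "w = ins_idx v q"
      using ins_idx_surj[OF vk uw(1) off_v(1)] ins_idx_surj[OF vk uw(2) off_v(2)] by metis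
    then have "\<forall>r<k-1. y r - z r = unitv p r - unitv q r"
      using diff by (simp add: unitv_ins_idx)
    moreover have "(Some (ins_idx v p), Some (ins_idx v q)) \<in> collapse_edges E v"
      using pq uw(4) off_v by (simp add: collapse_edges_Some_Some)
    moreover have "p \<noteq> q" using pq uw(3) by blast
    ultimately show ?thesis
      unfolding blowfish_nbr_def using pq(1,3) by blast
  qed
qed

theorem lemma4p9:
  fixes k m v :: nat and E :: "(nat \<times> nat) set" and W :: "nat \<Rightarrow> nat \<Rightarrow> real"
  assumes Edom: "E \<subseteq> {0..<k} \<times> {0..<k}"
      and Esym: "sym E"
      and Eirr: "\<forall>a. (a, a) \<notin> E"
      and Econn: "\<forall>a<k. \<forall>b<k. (a, b) \<in> E\<^sup>*"
      and vk: "v < k"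
  shows "(\<exists>c :: real \<Rightarrow> nat \<Rightarrow> real. \<forall>x :: nat \<Rightarrow> real. \<forall>r<m.
            mulvec k W x r
              = mulvec (k - 1) (matmul k W (Dmat v)) (del_entry v x) r + c (\<Sum>j<k. x j) r)
       \<and> (\<forall>y z :: nat \<Rightarrow> real. (\<Sum>j<k. y j) = (\<Sum>j<k. z j) \<longrightarrow>
            (blowfish_nbr (graph_edges E) k id y z
             \<longleftrightarrow> blowfish_nbr (collapse_edges E v) (k - 1) (ins_idx v) (del_entry v y) (del_entry v z)))"
proof (intro conjI allI impI)
  show "\<exists>c. \<forall>x. \<forall>r<m. mulvec k W x r
      = mulvec (k - 1) (matmul k W (Dmat v)) (del_entry v x) r + c (\<Sum>j<k. x j) r"
    by (rule exI[of _ "\<lambda>n r. n * W r v"]) (simp add: mulvec_eq_mulvec_Dmat[OF vk])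
next
  fix y z :: "nat \<Rightarrow> real"
  assume "(\<Sum>j<k. y j) = (\<Sum>j<k. z j)"
  then have diff_iff: "(\<forall>j<k. y j - z j = unitv u j - unitv w j) \<longleftrightarrow>
      (\<forall>p<k-1. del_entry v y p - del_entry v z p = unitv u (ins_idx v p) - unitv w (ins_idx v p))"
    if "u < k" "w < k" for u w
    using eq_on_lessThan_iff_ins_idx[OF vk, of "\<lambda>j. y j - z j" "\<lambda>j. unitv u j - unitv w j"]
    by (simp add: sum_subtractf sum_unitv that del_entry_def)
  show "blowfish_nbr (graph_edges E) k id y z
      \<longleftrightarrow> blowfish_nbr (collapse_edges E v) (k - 1) (ins_idx v) (del_entry v y) (del_entry v z)"
    unfolding blowfish_nbr_graph_edges_iff[OF Esym] blowfish_nbr_collapse_edges_iff[OF vk Esym]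
    using diff_iff by blast
qed

end
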